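(* Let $G=(V,E)$ be a finite graph, $p_e\in(0,1)$ and $x_e>0$ for each $e\in E$. Let $\Omega=\{0,1\}^E$, $\Sigma\subset\Omega$, $f:\Omega\to2^\Sigma$, $f(\omega)=\Sigma^\downarrow(\omega):=\{\eta\in\Sigma\mid\eta\subset\omega\}$, and $$\rho[\omega]=\mathbb{P}_p[\omega]\ (\omega\in\Omega),\qquad \gamma[\eta]=\mathbb{P}_{\frac{x}{p+x}}[\eta\mid\Sigma]\propto\prod_{e\in\eta}\frac{x_e}{p_e}\ (\eta\in\Sigma).$$ Let $\mathscr{P}$ be the probability measure on $\Omega\times\Sigma$ with $\mathscr{P}[\omega,\eta]\propto\rho[\omega]\gamma[\eta]\mathbf{1}[\eta\in f(\omega)]$. Then: (a) The marginal $\mathscr{P}_\Sigma$ of $\mathscr{P}$ on $\Sigma$ satisfies $\mathscr{P}_\Sigma[\eta]\propto\prod_{e\in\eta}x_e$. For each $\omega$ with $\mathscr{P}_\Omega[\omega]\neq0$, $\mathscr{P}[\cdot\mid\omega]=\mathbb{P}_{\frac{x}{p+x}}[\cdot\mid\Sigma^\downarrow(\omega)]$. (b) The marginal of $\mathscr{P}$ on $\Omega$ is $\mathscr{P}_\Omega=\mathscr{P}_\Sigma\cup\mathbb{P}_p$. For each $\eta\in\Sigma$ with $\mathscr{P}_\Sigma[\eta]\neq0$, $\mathscr{P}[\cdot\mid\eta]=\mathbb{P}_p\cup\delta_\eta$, i.e. Bernoulli percolation on $E$ with parameters $(p_e)$ conditioned on all edges of $\eta$ being open.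
   Context: Elements of $\{0,1\}^E$ are identified with subsets of $E$ (open edges). For $r=(r_e)\in[0,1]^E$, $\mathbb{P}_r$ is Bernoulli percolation: each edge $e$ open independently with probability $r_e$; $\frac{x}{p+x}$ denotes the vector $(x_e/(p_e+x_e))_e$. $\delta_\eta$ is the Dirac mass at $\eta$. For measures $\pi,\nu$ on $\{0,1\}^E$, $\pi\cup\nu$ is the law of the union of independent samples of $\pi$ and $\nu$ (a measure on $\Sigma\subset\Omega$ being viewed as a measure on $\Omega$). *)

theory Defs
  imports Complex_Main
begin

text \<open>Configurations in \<open>{0,1}^E\<close> are identified with subsets of the finite edge set E.
  Probability measures on the finite set \<open>Pow E\<close> are represented by their mass functions
  \<open>'e set \<Rightarrow> real\<close> (zero off their support).\<close>

definition bern :: "'e set \<Rightarrow> ('e \<Rightarrow> real) \<Rightarrow> 'e set \<Rightarrow> real" where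
  "bern E r \<omega> = (if \<omega> \<subseteq> E then (\<Prod>e\<in>\<omega>. r e) * (\<Prod>e\<in>E - \<omega>. 1 - r e) else 0)"

definition cond_mass :: "('a \<Rightarrow> real) \<Rightarrow> 'a set \<Rightarrow> 'a \<Rightarrow> real" where
  "cond_mass \<mu> A a = (if a \<in> A then \<mu> a / (\<Sum>b\<in>A. \<mu> b) else 0)"

definition dirac :: "'a \<Rightarrow> 'a \<Rightarrow> real" where
  "dirac \<eta> a = (if a = \<eta> then 1 else 0)"

text \<open>\<open>\<pi> \<union> \<nu>\<close>: law of the union of independent samples of \<open>\<pi>\<close> and \<open>\<nu>\<close> (both on \<open>Pow E\<close>).\<close>
definition union_law :: "'e set \<Rightarrow> ('e set \<Rightarrow> real) \<Rightarrow> ('e set \<Rightarrow> real) \<Rightarrow> 'e set \<Rightarrow> real" where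
  "union_law E \<pi> \<nu> \<omega> = (\<Sum>(a, b) \<in> {(a, b). a \<subseteq> E \<and> b \<subseteq> E \<and> a \<union> b = \<omega>}. \<pi> a * \<nu> b)"

definition down_set :: "'e set set \<Rightarrow> 'e set \<Rightarrow> 'e set set" where
  "down_set \<Sigma> \<omega> = {\<eta> \<in> \<Sigma>. \<eta> \<subseteq> \<omega>}"

definition ratio_param :: "('e \<Rightarrow> real) \<Rightarrow> ('e \<Rightarrow> real) \<Rightarrow> 'e \<Rightarrow> real" where
  "ratio_param p x e = x e / (p e + x e)"

definition rho :: "'e set \<Rightarrow> ('e \<Rightarrow> real) \<Rightarrow> 'e set \<Rightarrow> real" where
  "rho E p = bern E p"

definition gamma :: "'e set \<Rightarrow> ('e \<Rightarrow> real) \<Rightarrow> ('e \<Rightarrow> real) \<Rightarrow> 'e set set \<Rightarrow> 'e set \<Rightarrow> real" where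
  "gamma E p x \<Sigma> = cond_mass (bern E (ratio_param p x)) \<Sigma>"

definition joint_weight :: "'e set \<Rightarrow> ('e \<Rightarrow> real) \<Rightarrow> ('e \<Rightarrow> real) \<Rightarrow> 'e set set \<Rightarrow> 'e set \<Rightarrow> 'e set \<Rightarrow> real" where
  "joint_weight E p x \<Sigma> \<omega> \<eta> =
     (if \<omega> \<subseteq> E \<and> \<eta> \<in> down_set \<Sigma> \<omega> then rho E p \<omega> * gamma E p x \<Sigma> \<eta> else 0)"

definition joint :: "'e set \<Rightarrow> ('e \<Rightarrow> real) \<Rightarrow> ('e \<Rightarrow> real) \<Rightarrow> 'e set set \<Rightarrow> 'e set \<Rightarrow> 'e set \<Rightarrow> real" where
  "joint E p x \<Sigma> \<omega> \<eta> = joint_weight E p x \<Sigma> \<omega> \<eta> /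
     (\<Sum>\<omega>'\<in>Pow E. \<Sum>\<eta>'\<in>\<Sigma>. joint_weight E p x \<Sigma> \<omega>' \<eta>')"

definition marg_Omega :: "'e set \<Rightarrow> ('e \<Rightarrow> real) \<Rightarrow> ('e \<Rightarrow> real) \<Rightarrow> 'e set set \<Rightarrow> 'e set \<Rightarrow> real" where
  "marg_Omega E p x \<Sigma> \<omega> = (\<Sum>\<eta>\<in>\<Sigma>. joint E p x \<Sigma> \<omega> \<eta>)"

definition marg_Sigma :: "'e set \<Rightarrow> ('e \<Rightarrow> real) \<Rightarrow> ('e \<Rightarrow> real) \<Rightarrow> 'e set set \<Rightarrow> 'e set \<Rightarrow> real" where
  "marg_Sigma E p x \<Sigma> \<eta> = (\<Sum>\<omega>\<in>Pow E. joint E p x \<Sigma> \<omega> \<eta>)"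

end

theory Submission
  imports Defs
begin

text \<open>Bernoulli percolation
  factorises over any splitting of \<open>E\<close>: for \<open>A \<subseteq> \<omega>\<close> one has
  \<open>P_p[\<omega>] = (\<Prod>e\<in>A. p e) P_p^{E-A}[\<omega> - A]\<close>, and in particular \<open>P_p[A \<subseteq> \<omega>] = \<Prod>e\<in>A. p e\<close>.
  Summing out \<open>\<omega>\<close> therefore gives \<open>\<P>_\<Sigma>[\<eta>] \<propto> \<gamma>[\<eta>] \<Prod>e\<in>\<eta>. p e \<propto> \<Prod>e\<in>\<eta>. x e\<close>, and
  conditioning on \<open>\<eta>\<close> leaves \<open>\<eta>\<close> open and Bernoulli percolation on \<open>E - \<eta>\<close>, which is
  also the law of \<open>\<omega> \<union> \<eta>\<close> for \<open>\<omega>\<close> sampled from \<open>P_p\<close>. Conditioning on \<open>\<omega>\<close> simply restricts \<open>\<gamma>\<close>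
  to \<open>\<Sigma>\<^sup>\<down>(\<omega>)\<close>. The same factorisation, applied to each \<open>a \<subseteq> \<omega>\<close>, rewrites the union law
  \<open>\<P>_\<Sigma> \<union> P_p\<close> at \<open>\<omega>\<close> as \<open>P_p[\<omega>] \<gamma>[\<Sigma>\<^sup>\<down>(\<omega>)]\<close> up to normalisation, which is \<open>\<P>_\<Omega>[\<omega>]\<close>.\<close>

lemma sum_bern_Pow:
  assumes "finite E"
  shows "(\<Sum>\<omega>\<in>Pow E. bern E r \<omega>) = 1"
proof -
  have "(\<Sum>\<omega>\<in>Pow E. bern E r \<omega>) = (\<Sum>\<omega>\<in>Pow E. (\<Prod>e\<in>\<omega>. r e) * (\<Prod>e\<in>E - \<omega>. 1 - r e))"
    by (rule sum.cong) (auto simp: bern_def)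
  also have "\<dots> = (\<Prod>e\<in>E. r e + (1 - r e))"
    by (rule prod_add[symmetric]) fact
  finally show ?thesis by simp
qed

lemma bern_split:
  assumes "finite E" "A \<subseteq> E" "\<omega> \<subseteq> E"
  shows "bern E r \<omega> = bern A r (\<omega> \<inter> A) * bern (E - A) r (\<omega> - A)"
proof -
  have fin: "finite \<omega>" "finite (E - \<omega>)"
    using assms finite_subset by auto
  have "(E - \<omega>) \<inter> A = A - \<omega> \<inter> A" "(E - \<omega>) - A = (E - A) - (\<omega> - A)"
    using assms by auto
  then show ?thesis
    using assms prod.Int_Diff[OF fin(1), of r A] prod.Int_Diff[OF fin(2), of "\<lambda>e. 1 - r e" A]
    unfolding bern_def by (auto simp: mult_ac)
qed

lemma bern_factor_subset:
  assumes "finite E" "A \<subseteq> \<omega>" "\<omega> \<subseteq> E"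
  shows "bern E r \<omega> = (\<Prod>e\<in>A. r e) * bern (E - A) r (\<omega> - A)"
proof -
  have "\<omega> \<inter> A = A" using assms by auto
  then show ?thesis
    using bern_split[of E A \<omega> r] assms by (simp add: bern_def)
qed

lemma sum_bern_supersets:
  assumes "finite E" "A \<subseteq> E"
  shows "(\<Sum>\<omega>\<in>{\<omega>\<in>Pow E. A \<subseteq> \<omega>}. bern E r \<omega>) = (\<Prod>e\<in>A. r e)"
proof -
  have "bij_betw (\<lambda>T. A \<union> T) (Pow (E - A)) {\<omega>\<in>Pow E. A \<subseteq> \<omega>}"
    by (rule bij_betw_byWitness[where f' = "\<lambda>\<omega>. \<omega> - A"]) (use assms in auto)
  then have "(\<Sum>\<omega>\<in>{\<omega>\<in>Pow E. A \<subseteq> \<omega>}. bern E r \<omega>) = (\<Sum>T\<in>Pow (E - A). bern E r (A \<union> T))"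
    by (simp add: sum.reindex_bij_betw)
  also have "\<dots> = (\<Sum>T\<in>Pow (E - A). (\<Prod>e\<in>A. r e) * bern (E - A) r T)"
  proof (rule sum.cong)
    fix T assume "T \<in> Pow (E - A)"
    then have "A \<union> T - A = T" by auto
    then show "bern E r (A \<union> T) = (\<Prod>e\<in>A. r e) * bern (E - A) r T"
      using bern_factor_subset[of E A "A \<union> T" r] assms \<open>T \<in> Pow (E - A)\<close> by auto
  qed simp
  also have "\<dots> = (\<Prod>e\<in>A. r e)"
    using sum_bern_Pow[of "E - A" r] assms by (simp add: sum_distrib_left[symmetric])
  finally show ?thesis .
qed

lemma sum_bern_union_eq:
  assumes "finite E" "\<omega> \<subseteq> E"
  shows "(\<Sum>b\<in>{b\<in>Pow E. A \<union> b = \<omega>}. bern E r b) = (if A \<subseteq> \<omega> then bern (E - A) r (\<omega> - A) else 0)"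
proof (cases "A \<subseteq> \<omega>")
  case True
  have "bij_betw (\<lambda>S. (\<omega> - A) \<union> S) (Pow A) {b\<in>Pow E. A \<union> b = \<omega>}"
    by (rule bij_betw_byWitness[where f' = "\<lambda>b. b \<inter> A"]) (use assms True in auto)
  then have "(\<Sum>b\<in>{b\<in>Pow E. A \<union> b = \<omega>}. bern E r b) = (\<Sum>S\<in>Pow A. bern E r ((\<omega> - A) \<union> S))"
    by (simp add: sum.reindex_bij_betw)
  also have "\<dots> = (\<Sum>S\<in>Pow A. bern A r S * bern (E - A) r (\<omega> - A))"
  proof (rule sum.cong)
    fix S assume S: "S \<in> Pow A"
    then have "((\<omega> - A) \<union> S) \<inter> A = S" "((\<omega> - A) \<union> S) - A = \<omega> - A" by auto
    then show "bern E r ((\<omega> - A) \<union> S) = bern A r S * bern (E - A) r (\<omega> - A)"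
      using bern_split[of E A "(\<omega> - A) \<union> S" r] assms True S by auto
  qed simp
  also have "\<dots> = bern (E - A) r (\<omega> - A)"
    using sum_bern_Pow[of A r] assms True finite_subset[of A E]
    by (simp add: sum_distrib_right[symmetric])
  finally show ?thesis using True by simp
next
  case False
  then have "{b\<in>Pow E. A \<union> b = \<omega>} = {}" by auto
  then show ?thesis using False by (simp only: sum.empty if_False)
qed

lemma bern_pos:
  assumes "finite E" "\<And>e. e \<in> E \<Longrightarrow> 0 < r e \<and> r e < 1" "\<omega> \<subseteq> E"
  shows "bern E r \<omega> > 0"
  using assms unfolding bern_def
  by (auto intro!: mult_pos_pos prod_pos dest: subsetD)

lemma bern_ratio_param_times_prod:
  assumes "finite E" "A \<subseteq> E" "\<And>e. e \<in> E \<Longrightarrow> p e + x e \<noteq> 0"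
  shows "bern E (ratio_param p x) A * (\<Prod>e\<in>A. p e)
       = (\<Prod>e\<in>E. p e / (p e + x e)) * (\<Prod>e\<in>A. x e)"
proof -
  have "(\<Prod>e\<in>E - A. 1 - x e / (p e + x e)) = (\<Prod>e\<in>E - A. p e / (p e + x e))"
    using assms(3) by (intro prod.cong) (auto simp: field_simps)
  then have "bern E (ratio_param p x) A * (\<Prod>e\<in>A. p e)
      = ((\<Prod>e\<in>A. x e / (p e + x e)) * (\<Prod>e\<in>A. p e)) * (\<Prod>e\<in>E - A. p e / (p e + x e))"
    using assms(2) by (simp add: bern_def ratio_param_def mult_ac)
  also have "\<dots> = (\<Prod>e\<in>A. x e) * ((\<Prod>e\<in>A. p e / (p e + x e)) * (\<Prod>e\<in>E - A. p e / (p e + x e)))"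
    by (simp add: prod_dividef prod.distrib mult_ac)
  also have "\<dots> = (\<Prod>e\<in>A. x e) * (\<Prod>e\<in>E. p e / (p e + x e))"
    using prod.subset_diff[OF assms(2,1), of "\<lambda>e. p e / (p e + x e)"] by (simp add: mult_ac)
  finally show ?thesis by (simp add: mult_ac)
qed

lemma union_law_eq_sum:
  assumes "finite E"
  shows "union_law E \<mu> \<nu> \<omega> = (\<Sum>a\<in>Pow E. \<mu> a * (\<Sum>b\<in>{b\<in>Pow E. a \<union> b = \<omega>}. \<nu> b))"
proof -
  have "{(a, b). a \<subseteq> E \<and> b \<subseteq> E \<and> a \<union> b = \<omega>} = Sigma (Pow E) (\<lambda>a. {b\<in>Pow E. a \<union> b = \<omega>})"
    by auto
  then show ?thesis
    unfolding union_law_def using assms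
    by (simp add: sum.Sigma[symmetric] sum_distrib_left)
qed

lemma union_law_bern:
  assumes "finite E" "\<omega> \<subseteq> E"
  shows "union_law E \<mu> (bern E r) \<omega> = (\<Sum>a\<in>Pow \<omega>. \<mu> a * bern (E - a) r (\<omega> - a))"
proof -
  have "union_law E \<mu> (bern E r) \<omega> = (\<Sum>a\<in>Pow E. \<mu> a * (if a \<subseteq> \<omega> then bern (E - a) r (\<omega> - a) else 0))"
    by (simp only: union_law_eq_sum sum_bern_union_eq assms)
  also have "\<dots> = (\<Sum>a\<in>Pow \<omega>. \<mu> a * bern (E - a) r (\<omega> - a))"
    using assms by (intro sum.mono_neutral_cong_right) auto
  finally show ?thesis .
qed

lemma union_law_bern_dirac:
  assumes "finite E" "A \<subseteq> E" "\<omega> \<subseteq> E"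
  shows "union_law E (bern E r) (dirac A) \<omega> = (if A \<subseteq> \<omega> then bern (E - A) r (\<omega> - A) else 0)"
proof -
  have "union_law E (bern E r) (dirac A) \<omega> = (\<Sum>a\<in>Pow E. if A \<union> a = \<omega> then bern E r a else 0)"
    unfolding union_law_eq_sum[OF assms(1)]
    using assms by (intro sum.cong) (auto simp: dirac_def Un_commute)
  also have "\<dots> = (\<Sum>a\<in>{a\<in>Pow E. A \<union> a = \<omega>}. bern E r a)"
    by (rule sum.inter_filter[symmetric]) (simp add: assms)
  finally show ?thesis
    by (simp only: sum_bern_union_eq assms)
qed

lemma cond_mass_bern_supersets:
  assumes "finite E" "A \<subseteq> E" "\<omega> \<subseteq> E" "(\<Prod>e\<in>A. r e) \<noteq> 0"
  shows "cond_mass (bern E r) {\<omega>'\<in>Pow E. A \<subseteq> \<omega>'} \<omega> = (if A \<subseteq> \<omega> then bern (E - A) r (\<omega> - A) else 0)"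
  using assms bern_factor_subset[of E A \<omega> r] sum_bern_supersets[OF assms(1,2), of r]
  by (simp add: cond_mass_def)

lemma cond_mass_cond_mass:
  assumes "B \<subseteq> A" "(\<Sum>a\<in>A. \<mu> a) \<noteq> 0"
  shows "cond_mass (cond_mass \<mu> A) B = cond_mass \<mu> B"
proof
  fix b
  have "(\<Sum>b\<in>B. cond_mass \<mu> A b) = (\<Sum>b\<in>B. \<mu> b) / (\<Sum>a\<in>A. \<mu> a)"
    using assms(1) by (auto simp: cond_mass_def sum_divide_distrib intro!: sum.cong)
  then show "cond_mass (cond_mass \<mu> A) B b = cond_mass \<mu> B b"
    using assms by (auto simp: cond_mass_def)
qed

locale percolation_coupling =
  fixes E :: "'e set" and p x :: "'e \<Rightarrow> real" and \<Sigma> :: "'e set set"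
  assumes finite_E: "finite E"
    and p_pos: "\<And>e. e \<in> E \<Longrightarrow> 0 < p e"
    and x_pos: "\<And>e. e \<in> E \<Longrightarrow> 0 < x e"
    and Sigma_subset: "\<Sigma> \<subseteq> Pow E"
    and Sigma_nonempty: "\<Sigma> \<noteq> {}"
begin

definition Z :: real where
  "Z = (\<Sum>\<omega>\<in>Pow E. \<Sum>\<eta>\<in>\<Sigma>. joint_weight E p x \<Sigma> \<omega> \<eta>)"

lemma finite_Sigma: "finite \<Sigma>"
  using finite_E Sigma_subset finite_subset by blast

lemma ratio_param_range:
  assumes "e \<in> E"
  shows "0 < ratio_param p x e \<and> ratio_param p x e < 1"
  using p_pos[OF assms] x_pos[OF assms] by (simp add: ratio_param_def field_simps)

lemma bern_ratio_param_pos: "\<eta> \<subseteq> E \<Longrightarrow> bern E (ratio_param p x) \<eta> > 0"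
  using bern_pos[OF finite_E ratio_param_range] .

lemma sum_bern_ratio_param_Sigma_pos: "(\<Sum>\<eta>\<in>\<Sigma>. bern E (ratio_param p x) \<eta>) > 0"
  using Sigma_nonempty Sigma_subset finite_Sigma
  by (intro sum_pos bern_ratio_param_pos) auto

lemma gamma_pos: "\<eta> \<in> \<Sigma> \<Longrightarrow> gamma E p x \<Sigma> \<eta> > 0"
  using bern_ratio_param_pos sum_bern_ratio_param_Sigma_pos Sigma_subset
  by (auto simp: gamma_def cond_mass_def)

lemma gamma_eq_0: "\<eta> \<notin> \<Sigma> \<Longrightarrow> gamma E p x \<Sigma> \<eta> = 0"
  by (simp add: gamma_def cond_mass_def)

lemma joint_weight_eq:
  "joint_weight E p x \<Sigma> \<omega> \<eta> = (if \<eta> \<subseteq> \<omega> then bern E p \<omega> * gamma E p x \<Sigma> \<eta> else 0)"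
  by (auto simp: joint_weight_def down_set_def rho_def gamma_eq_0 bern_def)

lemma sum_joint_weight_Omega:
  "(\<Sum>\<omega>\<in>Pow E. joint_weight E p x \<Sigma> \<omega> \<eta>) = gamma E p x \<Sigma> \<eta> * (\<Prod>e\<in>\<eta>. p e)"
proof (cases "\<eta> \<in> \<Sigma>")
  case True
  then have "\<eta> \<subseteq> E" using Sigma_subset by auto
  have "(\<Sum>\<omega>\<in>Pow E. joint_weight E p x \<Sigma> \<omega> \<eta>)
      = (\<Sum>\<omega>\<in>{\<omega>\<in>Pow E. \<eta> \<subseteq> \<omega>}. bern E p \<omega> * gamma E p x \<Sigma> \<eta>)"
    by (rule sum.mono_neutral_cong_right) (auto simp: finite_E joint_weight_eq)
  also have "\<dots> = (\<Sum>\<omega>\<in>{\<omega>\<in>Pow E. \<eta> \<subseteq> \<omega>}. bern E p \<omega>) * gamma E p x \<Sigma> \<eta>"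
    by (simp add: sum_distrib_right)
  also have "\<dots> = gamma E p x \<Sigma> \<eta> * (\<Prod>e\<in>\<eta>. p e)"
    using sum_bern_supersets[OF finite_E \<open>\<eta> \<subseteq> E\<close>] by simp
  finally show ?thesis .
next
  case False
  then show ?thesis by (simp add: joint_weight_eq gamma_eq_0 cong: if_cong)
qed

lemma Z_eq: "Z = (\<Sum>\<eta>\<in>\<Sigma>. gamma E p x \<Sigma> \<eta> * (\<Prod>e\<in>\<eta>. p e))"
  unfolding Z_def by (subst sum.swap) (simp add: sum_joint_weight_Omega)

lemma Z_pos: "Z > 0"
proof -
  have "(\<Prod>e\<in>\<eta>. p e) > 0" if "\<eta> \<in> \<Sigma>" for \<eta>
    using that Sigma_subset p_pos by (intro prod_pos) auto
  then show ?thesis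
    unfolding Z_eq using Sigma_nonempty finite_Sigma gamma_pos
    by (intro sum_pos mult_pos_pos) auto
qed

lemma joint_eq: "joint E p x \<Sigma> \<omega> \<eta> = joint_weight E p x \<Sigma> \<omega> \<eta> / Z"
  by (simp add: joint_def Z_def)

lemma marg_Sigma_eq: "marg_Sigma E p x \<Sigma> \<eta> = gamma E p x \<Sigma> \<eta> * (\<Prod>e\<in>\<eta>. p e) / Z"
  by (simp add: marg_Sigma_def joint_eq sum_divide_distrib[symmetric] sum_joint_weight_Omega)

lemma marg_Omega_eq:
  "marg_Omega E p x \<Sigma> \<omega> = bern E p \<omega> * (\<Sum>\<eta>\<in>down_set \<Sigma> \<omega>. gamma E p x \<Sigma> \<eta>) / Z"
proof -
  have "(\<Sum>\<eta>\<in>\<Sigma>. joint_weight E p x \<Sigma> \<omega> \<eta>) = (\<Sum>\<eta>\<in>down_set \<Sigma> \<omega>. bern E p \<omega> * gamma E p x \<Sigma> \<eta>)"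
    by (rule sum.mono_neutral_cong_right) (auto simp: finite_Sigma down_set_def joint_weight_eq)
  then show ?thesis
    by (simp add: marg_Omega_def joint_eq sum_divide_distrib[symmetric] sum_distrib_left)
qed

lemma marg_Sigma_proportional:
  "\<exists>c>0. \<forall>\<eta>\<in>\<Sigma>. marg_Sigma E p x \<Sigma> \<eta> = c * (\<Prod>e\<in>\<eta>. x e)"
proof (intro exI conjI ballI)
  define S where "S = (\<Sum>\<eta>\<in>\<Sigma>. bern E (ratio_param p x) \<eta>)"
  define C where "C = (\<Prod>e\<in>E. p e / (p e + x e))"
  show "C / (S * Z) > 0"
    unfolding C_def S_def using p_pos x_pos sum_bern_ratio_param_Sigma_pos Z_pos
    by (intro divide_pos_pos prod_pos mult_pos_pos) (auto intro: add_pos_pos)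
  fix \<eta> assume "\<eta> \<in> \<Sigma>"
  then have "bern E (ratio_param p x) \<eta> * (\<Prod>e\<in>\<eta>. p e) = C * (\<Prod>e\<in>\<eta>. x e)"
    unfolding C_def using Sigma_subset p_pos x_pos
    by (intro bern_ratio_param_times_prod finite_E) (auto intro!: add_pos_pos less_imp_neq[symmetric])
  then show "marg_Sigma E p x \<Sigma> \<eta> = C / (S * Z) * (\<Prod>e\<in>\<eta>. x e)"
    using \<open>\<eta> \<in> \<Sigma>\<close> by (simp add: marg_Sigma_eq gamma_def cond_mass_def S_def)
qed

lemma joint_cond_Omega:
  assumes "marg_Omega E p x \<Sigma> \<omega> \<noteq> 0"
  shows "joint E p x \<Sigma> \<omega> \<eta> / marg_Omega E p x \<Sigma> \<omega>
       = cond_mass (bern E (ratio_param p x)) (down_set \<Sigma> \<omega>) \<eta>"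
proof -
  have "bern E p \<omega> \<noteq> 0" "(\<Sum>\<eta>\<in>down_set \<Sigma> \<omega>. gamma E p x \<Sigma> \<eta>) \<noteq> 0"
    using assms by (auto simp: marg_Omega_eq)
  then have "joint E p x \<Sigma> \<omega> \<eta> / marg_Omega E p x \<Sigma> \<omega> = cond_mass (gamma E p x \<Sigma>) (down_set \<Sigma> \<omega>) \<eta>"
    using Z_pos by (auto simp: joint_eq joint_weight_eq marg_Omega_eq cond_mass_def down_set_def gamma_eq_0)
  also have "\<dots> = cond_mass (bern E (ratio_param p x)) (down_set \<Sigma> \<omega>) \<eta>"
    unfolding gamma_def using sum_bern_ratio_param_Sigma_pos
    by (subst cond_mass_cond_mass) (auto simp: down_set_def)
  finally show ?thesis .
qed

lemma marg_Omega_union_law: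
  assumes "\<omega> \<subseteq> E"
  shows "marg_Omega E p x \<Sigma> \<omega> = union_law E (marg_Sigma E p x \<Sigma>) (bern E p) \<omega>"
proof -
  have "union_law E (marg_Sigma E p x \<Sigma>) (bern E p) \<omega>
      = (\<Sum>a\<in>Pow \<omega>. gamma E p x \<Sigma> a * ((\<Prod>e\<in>a. p e) * bern (E - a) p (\<omega> - a)) / Z)"
    by (simp add: union_law_bern finite_E assms marg_Sigma_eq mult_ac)
  also have "\<dots> = bern E p \<omega> * (\<Sum>a\<in>Pow \<omega>. gamma E p x \<Sigma> a) / Z"
    using assms bern_factor_subset[OF finite_E _ assms]
    by (simp add: sum_divide_distrib sum_distrib_left mult_ac)
  also have "(\<Sum>a\<in>Pow \<omega>. gamma E p x \<Sigma> a) = (\<Sum>a\<in>down_set \<Sigma> \<omega>. gamma E p x \<Sigma> a)"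
    using assms finite_E finite_subset
    by (intro sum.mono_neutral_right) (use gamma_eq_0 in \<open>auto simp: down_set_def\<close>)
  finally show ?thesis
    by (simp add: marg_Omega_eq)
qed

lemma joint_cond_Sigma:
  assumes "marg_Sigma E p x \<Sigma> \<eta> \<noteq> 0" "\<omega> \<subseteq> E"
  shows "joint E p x \<Sigma> \<omega> \<eta> / marg_Sigma E p x \<Sigma> \<eta> = (if \<eta> \<subseteq> \<omega> then bern (E - \<eta>) p (\<omega> - \<eta>) else 0)"
proof -
  have "gamma E p x \<Sigma> \<eta> \<noteq> 0" "(\<Prod>e\<in>\<eta>. p e) \<noteq> 0"
    using assms(1) by (auto simp: marg_Sigma_eq)
  then show ?thesis
    using Z_pos bern_factor_subset[OF finite_E _ assms(2), of \<eta> p]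
    by (auto simp: joint_eq joint_weight_eq marg_Sigma_eq)
qed

end

theorem proposition3p1:
  fixes E :: "'e set" and p x :: "'e \<Rightarrow> real" and \<Sigma> :: "'e set set"
  assumes finE: "finite E"
    and p_range: "\<And>e. e \<in> E \<Longrightarrow> 0 < p e \<and> p e < 1"
    and x_pos: "\<And>e. e \<in> E \<Longrightarrow> 0 < x e"
    and Sigma_sub: "\<Sigma> \<subseteq> Pow E"
    and Sigma_ne: "\<Sigma> \<noteq> {}"
  shows
    \<comment> \<open>(a)\<close>
    "(\<exists>c>0. \<forall>\<eta>\<in>\<Sigma>. marg_Sigma E p x \<Sigma> \<eta> = c * (\<Prod>e\<in>\<eta>. x e))
     \<and> (\<forall>\<omega>\<in>Pow E. marg_Omega E p x \<Sigma> \<omega> \<noteq> 0 \<longrightarrow>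
          (\<forall>\<eta>. joint E p x \<Sigma> \<omega> \<eta> / marg_Omega E p x \<Sigma> \<omega>
                 = cond_mass (bern E (ratio_param p x)) (down_set \<Sigma> \<omega>) \<eta>))
     \<comment> \<open>(b)\<close>
     \<and> (\<forall>\<omega>\<in>Pow E. marg_Omega E p x \<Sigma> \<omega> = union_law E (marg_Sigma E p x \<Sigma>) (bern E p) \<omega>)
     \<and> (\<forall>\<eta>\<in>\<Sigma>. marg_Sigma E p x \<Sigma> \<eta> \<noteq> 0 \<longrightarrow>
          (\<forall>\<omega>\<in>Pow E. joint E p x \<Sigma> \<omega> \<eta> / marg_Sigma E p x \<Sigma> \<eta>
                 = union_law E (bern E p) (dirac \<eta>) \<omega>
             \<and> joint E p x \<Sigma> \<omega> \<eta> / marg_Sigma E p x \<Sigma> \<eta>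
                 = cond_mass (bern E p) {\<omega>'\<in>Pow E. \<eta> \<subseteq> \<omega>'} \<omega>))"
proof -
  interpret percolation_coupling E p x \<Sigma>
    using assms by unfold_locales auto
  have "joint E p x \<Sigma> \<omega> \<eta> / marg_Sigma E p x \<Sigma> \<eta> = union_law E (bern E p) (dirac \<eta>) \<omega>
      \<and> joint E p x \<Sigma> \<omega> \<eta> / marg_Sigma E p x \<Sigma> \<eta> = cond_mass (bern E p) {\<omega>'\<in>Pow E. \<eta> \<subseteq> \<omega>'} \<omega>"
    if "\<eta> \<in> \<Sigma>" "marg_Sigma E p x \<Sigma> \<eta> \<noteq> 0" "\<omega> \<in> Pow E" for \<eta> \<omega>
  proof -
    have \<eta>: "\<eta> \<subseteq> E" "(\<Prod>e\<in>\<eta>. p e) \<noteq> 0" and \<omega>: "\<omega> \<subseteq> E"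
      using that Sigma_sub by (auto simp: marg_Sigma_eq)
    show ?thesis
      using joint_cond_Sigma[OF that(2) \<omega>] union_law_bern_dirac[OF finE \<eta>(1) \<omega>]
        cond_mass_bern_supersets[OF finE \<eta>(1) \<omega> \<eta>(2)]
      by simp
  qed
  then show ?thesis
    using marg_Sigma_proportional joint_cond_Omega marg_Omega_union_law by blast
qed

end
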